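(* Let $S=\{0,1,2,\dots\}$, let $\lambda,\mu>0$, and let $Q=\{q(i,j):i,j\in S\}$ be given by $q(i,i+1)=\lambda$; $q(i,i+k)=0$ for $k\ge 2$; $q(i,i-k)=\mu$ for $i\ge 1$ and $k=1,\dots,i$; $q(i,j)=0$ for $j<0$ (i.e. no jumps below $0$); and $q(i,i)=-(\lambda+i\mu)$. Let $\Pi=\{\pi(i,j)\}$ be the associated jump matrix: $c(i)=\lambda+i\mu$, $\pi(i,j)=q(i,j)/c(i)$ for $i\neq j$, $\pi(i,i)=0$. Then any discrete-time Markov chain on $S$ with initial distribution a strictly positive probability measure $\tau$ on $S$ and transition probabilities $\pi(i,j)$ is irreducible and recurrent. Consequently, the minimal nonnegative solution $p^*_t(x,y)$ of the Kolmogorov backward equations $$\frac{d}{dt}p_t(x,y)=\sum_{z\in S}q(x,z)p_t(z,y)\ (t>0,\ x,y\in S),\qquad p_0(x,y)=\delta_{xy},$$ is stochastic, i.e. $\sum_{y\in S}p^*_t(x,y)=1$ for all $x\in S$, $t\ge 0$.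
   Context: The minimal solution of the backward equations is the standard one associated with a conservative rate matrix $Q$ (nonnegative off-diagonal entries, rows summing to $0$); it is known to satisfy the Chapman–Kolmogorov equations and all transition-function properties except possibly $\sum_y p_t(x,y)=1$. *)

theory Defs
  imports "HOL-Analysis.Analysis"
begin

definition qrate :: "real \<Rightarrow> real \<Rightarrow> nat \<Rightarrow> nat \<Rightarrow> real" where
  "qrate lam mu i j =
     (if j = Suc i then lam
      else if j < i then mu
      else if j = i then - (lam + real i * mu)
      else 0)"

definition crate :: "real \<Rightarrow> real \<Rightarrow> nat \<Rightarrow> real" where
  "crate lam mu i = lam + real i * mu"

definition jump :: "real \<Rightarrow> real \<Rightarrow> nat \<Rightarrow> nat \<Rightarrow> real" where
  "jump lam mu i j = (if i \<noteq> j then qrate lam mu i j / crate lam mu i else 0)"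

fun nstep :: "(nat \<Rightarrow> nat \<Rightarrow> real) \<Rightarrow> nat \<Rightarrow> nat \<Rightarrow> nat \<Rightarrow> real" where
  "nstep P 0 i j = (if i = j then 1 else 0)"
| "nstep P (Suc n) i j = (\<Sum>k. P i k * nstep P n k j)"

definition dtmc_irreducible :: "(nat \<Rightarrow> nat \<Rightarrow> real) \<Rightarrow> bool" where
  "dtmc_irreducible P \<longleftrightarrow> (\<forall>i j. \<exists>n. nstep P n i j > 0)"

text \<open>first_passage P n i j = probability, starting at i, that the first visit to j
  (at a time \<ge> 1) happens at time n+1.\<close>
fun first_passage :: "(nat \<Rightarrow> nat \<Rightarrow> real) \<Rightarrow> nat \<Rightarrow> nat \<Rightarrow> nat \<Rightarrow> real" where
  "first_passage P 0 i j = P i j"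
| "first_passage P (Suc n) i j = (\<Sum>k. if k = j then 0 else P i k * first_passage P n k j)"

definition recurrent_state :: "(nat \<Rightarrow> nat \<Rightarrow> real) \<Rightarrow> nat \<Rightarrow> bool" where
  "recurrent_state P i \<longleftrightarrow> ((\<lambda>n. first_passage P n i i) sums 1)"

definition dtmc_recurrent :: "(nat \<Rightarrow> nat \<Rightarrow> real) \<Rightarrow> bool" where
  "dtmc_recurrent P \<longleftrightarrow> (\<forall>i. recurrent_state P i)"

definition backward_nonneg_solution ::
  "(nat \<Rightarrow> nat \<Rightarrow> real) \<Rightarrow> (real \<Rightarrow> nat \<Rightarrow> nat \<Rightarrow> real) \<Rightarrow> bool" where
  "backward_nonneg_solution q p \<longleftrightarrow>
     (\<forall>t\<ge>0. \<forall>x y. p t x y \<ge> 0) \<and>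
     (\<forall>x y. p 0 x y = (if x = y then 1 else 0)) \<and>
     (\<forall>x y. ((\<lambda>s. p s x y) \<longlongrightarrow> p 0 x y) (at_right 0)) \<and>
     (\<forall>t>0. \<forall>x y. ((\<lambda>s. p s x y) has_real_derivative (\<Sum>z. q x z * p t z y)) (at t))"

definition minimal_backward_solution ::
  "(nat \<Rightarrow> nat \<Rightarrow> real) \<Rightarrow> (real \<Rightarrow> nat \<Rightarrow> nat \<Rightarrow> real) \<Rightarrow> bool" where
  "minimal_backward_solution q p \<longleftrightarrow>
     backward_nonneg_solution q p \<and>
     (\<forall>p'. backward_nonneg_solution q p' \<longrightarrow> (\<forall>t\<ge>0. \<forall>x y. p t x y \<le> p' t x y))"

end

theory Submission
  imports Defs
begin

(*
  The jump chain moves from i to i + 1 with probability lam / c(i) and otherwise to a uniformly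
  chosen state below i, so every state leads to every other one. For recurrence of j, the
  probability h(k) of never visiting j from k is harmonic for the chain killed at j, while
  V(l) = rho^(l - j), rho = 1 + mu / lam, is superharmonic off j and unbounded; at a maximiser
  of h - eps V off j these two facts contradict each other unless h = 0.

  For the continuous-time statement we write down a stochastic solution explicitly. The tails
  F_k(t, x) = P_x(X_t >= k) satisfy F_k' = lam F_(k-1) - c(k) F_k, a triangular system solved
  by finite sums of exponentials, and as functions of x they satisfy the backward equations.
  A minimum principle for the backward operator on {0..K}, whose boundary state K + 1 is
  controlled by the supersolution e^(lam t) 2^x, shows that this solution lies below every
  nonnegative solution and that F_k vanishes as k tends to infinity. Hence the minimal
  solution is the explicit one, and it is stochastic.
*)

declare first_passage.simps(2)[simp del] nstep.simps(2)[simp del] sum.atMost_Suc[simp del]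

lemma suminf_eq_sum_atMost:
  fixes g :: "nat \<Rightarrow> 'a::{comm_monoid_add,t2_space}"
  assumes "\<And>l. n < l \<Longrightarrow> g l = 0"
  shows "suminf g = (\<Sum>l\<le>n. g l)"
  by (rule suminf_finite) (use assms in auto)

lemma obtain_last_maximizer:
  fixes u :: "nat \<Rightarrow> 'a::linorder"
  assumes "P a" and small: "\<And>l. P l \<Longrightarrow> K < l \<Longrightarrow> u l < u a"
  obtains m where "P m" "\<And>l. P l \<Longrightarrow> u l \<le> u m" "\<And>l. P l \<Longrightarrow> m < l \<Longrightarrow> u l < u m"
proof -
  define B where "B = {l. P l \<and> u a \<le> u l}"
  have finB: "finite B"
    by (rule finite_subset[of _ "{..K}"]) (auto simp: B_def dest: small not_le_imp_less)
  have aB: "a \<in> B" using assms(1) by (simp add: B_def)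
  define M where "M = Max (u ` B)"
  have le_M: "u l \<le> M" if "P l" for l
  proof (cases "l \<in> B")
    case True then show ?thesis using finB by (simp add: M_def)
  next
    case False then have "u l < u a" using that by (simp add: B_def)
    also have "u a \<le> M" using finB aB by (simp add: M_def)
    finally show ?thesis by simp
  qed
  define C where "C = {l \<in> B. u l = M}"
  have "M \<in> u ` B" unfolding M_def using finB aB by (intro Max_in) auto
  then have finC: "finite C" and neC: "C \<noteq> {}" using finB by (auto simp: C_def)
  define m where "m = Max C"
  have "m \<in> C" unfolding m_def using finC neC by (rule Max_in)
  then have mA: "P m" and um: "u m = M" by (auto simp: C_def B_def)
  show ?thesis
  proof (rule that[OF mA])
    show "u l \<le> u m" if "P l" for l using le_M[OF that] um by simp
    show "u l < u m" if "P l" "m < l" for l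
    proof -
      have "l \<notin> C" using that Max_ge[OF finC, of l] by (auto simp: m_def)
      moreover have "l \<in> B" if "u l = M" using that aB le_M[OF assms(1)] \<open>P l\<close> by (simp add: B_def)
      ultimately show ?thesis using le_M[OF \<open>P l\<close>] um by (fastforce simp: C_def)
    qed
  qed
qed

section \<open>Irreducibility of the jump chain\<close>

locale positive_rates =
  fixes lam mu :: real
  assumes lam_pos: "0 < lam" and mu_pos: "0 < mu"
begin

abbreviation c :: "nat \<Rightarrow> real" where "c \<equiv> crate lam mu"
abbreviation J :: "nat \<Rightarrow> nat \<Rightarrow> real" where "J \<equiv> jump lam mu"

lemma crate_pos: "0 < c i"
  using lam_pos mu_pos unfolding crate_def by (simp add: add_pos_nonneg)

lemma jump_eq: "J i l = (if l = Suc i then lam / c i else if l < i then mu / c i else 0)"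
  unfolding jump_def qrate_def by auto

lemma jump_nonneg: "0 \<le> J i l"
  using crate_pos[of i] lam_pos mu_pos by (simp add: jump_eq)

lemma jump_eq_0: "Suc i < l \<Longrightarrow> J i l = 0"
  by (simp add: jump_eq)

lemma jump_up_pos: "0 < J i (Suc i)"
  using crate_pos[of i] lam_pos by (simp add: jump_eq)

lemma jump_down_pos: "l < i \<Longrightarrow> 0 < J i l"
  using crate_pos[of i] mu_pos by (simp add: jump_eq)

lemma jump_row_sum: "(\<Sum>l\<le>Suc i. J i l) = 1"
proof -
  have "(\<Sum>l\<le>Suc i. J i l) = (\<Sum>l<i. J i l) + J i i + J i (Suc i)"
    by (simp add: lessThan_Suc_atMost[symmetric])
  also have "(\<Sum>l<i. J i l) = (\<Sum>l<i. mu / c i)"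
    by (rule sum.cong) (auto simp: jump_eq)
  finally have "(\<Sum>l\<le>Suc i. J i l) = (real i * mu + lam) / c i"
    by (simp add: jump_eq add_divide_distrib)
  also have "\<dots> = 1" using crate_pos[of i] by (simp add: crate_def)
  finally show ?thesis .
qed

lemma suminf_jump_mult: "(\<Sum>l. J i l * g l) = (\<Sum>l\<le>Suc i. J i l * g l)"
  by (rule suminf_eq_sum_atMost) (simp add: jump_eq_0)

lemma nstep_nonneg: "0 \<le> nstep J n i j"
proof (induction n arbitrary: i)
  case (Suc n) then show ?case
    unfolding nstep.simps(2) suminf_jump_mult by (intro sum_nonneg mult_nonneg_nonneg jump_nonneg)
qed simp

lemma nstep_Suc_ge: "J i k * nstep J n k j \<le> nstep J (Suc n) i j"
proof (cases "k \<le> Suc i")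
  case True
  then show ?thesis unfolding nstep.simps(2) suminf_jump_mult
    by (intro member_le_sum[where f="\<lambda>k. J i k * nstep J n k j"] mult_nonneg_nonneg jump_nonneg nstep_nonneg) auto
next
  case False
  then show ?thesis using nstep_nonneg[of "Suc n" i j] by (simp add: jump_eq_0)
qed

lemma nstep_up_pos: "0 < nstep J m i (i + m)"
proof (induction m arbitrary: i)
  case (Suc m)
  have "0 < J i (Suc i) * nstep J m (Suc i) (Suc i + m)"
    using Suc.IH[of "Suc i"] jump_up_pos[of i] by simp
  also have "\<dots> \<le> nstep J (Suc m) i (i + Suc m)"
    using nstep_Suc_ge[of i "Suc i" m "i + Suc m"] by simp
  finally show ?case .
qed simp

lemma nstep_down_pos: "j < i \<Longrightarrow> 0 < nstep J 1 i j"
  using jump_down_pos[of j i] nstep_Suc_ge[of i j 0 j] by simp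

lemma jump_irreducible: "dtmc_irreducible J"
  unfolding dtmc_irreducible_def
proof (intro allI)
  fix i j :: nat
  consider "j < i" | "j = i" | "i < j" by linarith
  then show "\<exists>n. 0 < nstep J n i j"
  proof cases
    case 1
    then show ?thesis using nstep_down_pos by blast
  next
    case 2
    have "0 < J i (Suc i) * nstep J 1 (Suc i) i"
      using jump_up_pos[of i] nstep_down_pos[of i "Suc i"] by simp
    also have "\<dots> \<le> nstep J 2 i i"
      using nstep_Suc_ge[of i "Suc i" 1 i] by (simp add: numeral_2_eq_2)
    finally show ?thesis using 2 by blast
  next
    case 3
    then show ?thesis using nstep_up_pos[of "j - i" i] by auto
  qed
qed

section \<open>Recurrence of the jump chain\<close>

definition taboo :: "nat \<Rightarrow> nat \<Rightarrow> nat \<Rightarrow> real" where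
  "taboo j k l = (if l = j then 0 else J k l)"

definition taboo_step :: "nat \<Rightarrow> (nat \<Rightarrow> real) \<Rightarrow> nat \<Rightarrow> real" where
  "taboo_step j g k = (\<Sum>l\<le>Suc k. taboo j k l * g l)"

definition avoid_prob :: "nat \<Rightarrow> nat \<Rightarrow> nat \<Rightarrow> real" where
  "avoid_prob j n k = 1 - (\<Sum>m\<le>n. first_passage J m k j)"

lemma taboo_nonneg: "0 \<le> taboo j k l"
  by (simp add: taboo_def jump_nonneg)

lemma taboo_step_nonneg: "(\<And>l. 0 \<le> g l) \<Longrightarrow> 0 \<le> taboo_step j g k"
  unfolding taboo_step_def by (intro sum_nonneg mult_nonneg_nonneg taboo_nonneg)

lemma taboo_step_diff: "taboo_step j (\<lambda>l. f l - a * g l) k = taboo_step j f k - a * taboo_step j g k"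
  unfolding taboo_step_def by (simp add: sum_subtractf sum_distrib_left algebra_simps)

lemma taboo_step_one: "taboo_step j (\<lambda>_. 1) k = 1 - J k j"
proof -
  have "taboo_step j (\<lambda>_. 1) k = (\<Sum>l\<le>Suc k. J k l - (if l = j then J k l else 0))"
    unfolding taboo_step_def taboo_def by (rule sum.cong) auto
  also have "\<dots> = 1 - (if j \<le> Suc k then J k j else 0)"
    by (simp add: sum_subtractf jump_row_sum)
  also have "\<dots> = 1 - J k j" by (auto simp: jump_eq_0)
  finally show ?thesis .
qed

lemma first_passage_Suc_taboo: "first_passage J (Suc n) k j = taboo_step j (\<lambda>l. first_passage J n l j) k"
  unfolding first_passage.simps(2) taboo_step_def
  by (rule trans[OF suminf_eq_sum_atMost]) (auto simp: jump_eq_0 taboo_def intro!: sum.cong)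

lemma first_passage_nonneg: "0 \<le> first_passage J n k j"
  by (induction n arbitrary: k) (simp_all add: jump_nonneg first_passage_Suc_taboo taboo_step_nonneg)

lemma avoid_prob_0: "avoid_prob j 0 k = taboo_step j (\<lambda>_. 1) k"
  by (simp add: avoid_prob_def taboo_step_one)

lemma avoid_prob_Suc: "avoid_prob j (Suc n) k = taboo_step j (avoid_prob j n) k"
proof -
  have "avoid_prob j (Suc n) k = 1 - J k j - (\<Sum>m\<le>n. first_passage J (Suc m) k j)"
    unfolding avoid_prob_def by (simp add: sum.atMost_Suc_shift)
  also have "(\<Sum>m\<le>n. first_passage J (Suc m) k j)
      = (\<Sum>l\<le>Suc k. taboo j k l * (\<Sum>m\<le>n. first_passage J m l j))"
    unfolding first_passage_Suc_taboo taboo_step_def sum_distrib_left by (rule sum.swap)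
  also have "1 - J k j - \<dots> = taboo_step j (avoid_prob j n) k"
    unfolding avoid_prob_def taboo_step_one[symmetric] taboo_step_def
    by (simp add: right_diff_distrib sum_subtractf)
  finally show ?thesis .
qed

lemma avoid_prob_nonneg: "0 \<le> avoid_prob j n k"
  by (induction n arbitrary: k) (simp_all add: avoid_prob_0 avoid_prob_Suc taboo_step_nonneg)

lemma avoid_prob_le_1: "avoid_prob j n k \<le> 1"
  unfolding avoid_prob_def by (simp add: sum_nonneg first_passage_nonneg)

lemma avoid_prob_Suc_le: "avoid_prob j (Suc n) k \<le> avoid_prob j n k"
  unfolding avoid_prob_def by (simp add: sum.atMost_Suc first_passage_nonneg)

definition never_visit :: "nat \<Rightarrow> nat \<Rightarrow> real" where
  "never_visit j k = lim (\<lambda>n. avoid_prob j n k)"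

lemma avoid_prob_tendsto: "(\<lambda>n. avoid_prob j n k) \<longlonglongrightarrow> never_visit j k"
proof -
  have "decseq (\<lambda>n. avoid_prob j n k)" by (rule decseq_SucI) (rule avoid_prob_Suc_le)
  then have "convergent (\<lambda>n. avoid_prob j n k)"
    using avoid_prob_nonneg decseq_convergent by (metis convergent_def)
  then show ?thesis unfolding never_visit_def by (rule convergent_LIMSEQ_iff[THEN iffD1])
qed

lemma never_visit_nonneg: "0 \<le> never_visit j k"
  by (rule tendsto_lowerbound[OF avoid_prob_tendsto]) (auto simp: avoid_prob_nonneg)

lemma never_visit_le_1: "never_visit j k \<le> 1"
  by (rule tendsto_upperbound[OF avoid_prob_tendsto]) (auto simp: avoid_prob_le_1)

lemma never_visit_harmonic: "never_visit j k = taboo_step j (never_visit j) k"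
proof (rule LIMSEQ_unique)
  show "(\<lambda>n. avoid_prob j (Suc n) k) \<longlonglongrightarrow> never_visit j k"
    by (rule LIMSEQ_Suc[OF avoid_prob_tendsto])
  show "(\<lambda>n. avoid_prob j (Suc n) k) \<longlonglongrightarrow> taboo_step j (never_visit j) k"
    unfolding avoid_prob_Suc taboo_step_def by (intro tendsto_sum tendsto_mult_left avoid_prob_tendsto)
qed

(* With rho = 1 + mu / lam the gain lam (rho - 1) from the upward jump is exactly offset by
   the suppressed jump to j. Truncated subtraction makes lyap j constant below j. *)
definition lyap :: "nat \<Rightarrow> nat \<Rightarrow> real" where
  "lyap j l = (1 + mu / lam) ^ (l - j)"

lemma lyap_base_gt_1: "1 < 1 + mu / lam"
  using lam_pos mu_pos by simp

lemma lyap_pos: "0 < lyap j l"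
  unfolding lyap_def using lyap_base_gt_1 by simp

lemma lyap_mono: "l \<le> k \<Longrightarrow> lyap j l \<le> lyap j k"
  unfolding lyap_def using lyap_base_gt_1 by (intro power_increasing) auto

lemma taboo_step_lyap_le:
  assumes "k \<noteq> j"
  shows "taboo_step j (lyap j) k \<le> lyap j k"
proof (cases "k < j")
  case True
  have "taboo_step j (lyap j) k \<le> (\<Sum>l\<le>Suc k. J k l)"
    unfolding taboo_step_def
  proof (rule sum_mono)
    fix l assume "l \<in> {..Suc k}"
    then have "lyap j l = 1" using True by (simp add: lyap_def)
    then show "taboo j k l * lyap j l \<le> J k l" by (simp add: taboo_def jump_nonneg)
  qed
  also have "\<dots> = lyap j k" using True by (simp add: jump_row_sum lyap_def)
  finally show ?thesis .
next
  case False
  with assms have "j < k" by simp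
  have "taboo_step j (lyap j) k
      \<le> (\<Sum>l\<le>Suc k. J k l * lyap j k + (if l = Suc k then mu / c k * lyap j k else 0)
                                        - (if l = j then mu / c k * lyap j k else 0))"
    unfolding taboo_step_def
  proof (rule sum_mono)
    fix l assume "l \<in> {..Suc k}"
    then consider "l = Suc k" | "l = j" | "l = k" | "l < k" "l \<noteq> j" by force
    then show "taboo j k l * lyap j l \<le> J k l * lyap j k + (if l = Suc k then mu / c k * lyap j k else 0)
                                        - (if l = j then mu / c k * lyap j k else 0)"
    proof cases
      case 1
      have "lam * lyap j (Suc k) = lam * lyap j k + mu * lyap j k"
        using \<open>j < k\<close> lam_pos by (simp add: lyap_def Suc_diff_le field_simps)
      then show ?thesis using 1 \<open>j < k\<close> by (simp add: taboo_def jump_eq add_divide_distrib)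
    next
      case 4
      then have "mu / c k * lyap j l \<le> mu / c k * lyap j k"
        using lyap_mono[of l k j] crate_pos[of k] mu_pos by (intro mult_left_mono) auto
      then show ?thesis using 4 by (simp add: taboo_def jump_eq mult.commute)
    qed (use \<open>j < k\<close> in \<open>simp_all add: taboo_def jump_eq\<close>)
  qed
  also have "\<dots> = lyap j k"
    using \<open>j < k\<close> by (simp add: sum.distrib sum_subtractf sum_distrib_right[symmetric] jump_row_sum)
  finally show ?thesis .
qed

lemma taboo_step_less_max:
  assumes "k \<noteq> j" and "0 < M" and le_M: "\<And>l. l \<noteq> j \<Longrightarrow> u l \<le> M"
    and less_M: "\<And>l. l \<noteq> j \<Longrightarrow> k < l \<Longrightarrow> u l < M"
  shows "taboo_step j u k < M"
proof -
  have "taboo_step j u k < (\<Sum>l\<le>Suc k. J k l * M)"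
    unfolding taboo_step_def
  proof (rule sum_strict_mono_ex1)
    show "\<forall>l\<in>{..Suc k}. taboo j k l * u l \<le> J k l * M"
      using le_M \<open>0 < M\<close> jump_nonneg by (auto simp: taboo_def intro: mult_left_mono)
    show "\<exists>l\<in>{..Suc k}. taboo j k l * u l < J k l * M"
    proof (cases "j \<le> Suc k")
      case True
      then have "0 < J k j" using \<open>k \<noteq> j\<close>
        by (cases "j = Suc k") (auto intro: jump_up_pos jump_down_pos)
      then show ?thesis using True \<open>0 < M\<close> by (intro bexI[of _ j]) (auto simp: taboo_def)
    next
      case False
      then show ?thesis using less_M[of "Suc k"] jump_up_pos[of k]
        by (intro bexI[of _ "Suc k"]) (auto simp: taboo_def)
    qed
  qed simp
  also have "\<dots> = M" by (simp add: sum_distrib_right[symmetric] jump_row_sum)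
  finally show ?thesis .
qed

lemma never_visit_eq_0:
  assumes "k \<noteq> j"
  shows "never_visit j k = 0"
proof (rule ccontr)
  assume "never_visit j k \<noteq> 0"
  then have pos: "0 < never_visit j k" using never_visit_nonneg[of j k] by simp
  define eps where "eps = never_visit j k / (2 * lyap j k)"
  have eps: "0 < eps" using pos lyap_pos[of j k] by (simp add: eps_def)
  define u where "u l = never_visit j l - eps * lyap j l" for l
  have uk: "0 < u k" using pos lyap_pos[of j k] by (simp add: u_def eps_def)
  obtain n where n: "1 / eps < (1 + mu / lam) ^ n" using real_arch_pow[OF lyap_base_gt_1] by blast
  have u_neg: "u l < 0" if "j + n < l" for l
  proof -
    have "(1 + mu / lam) ^ n \<le> lyap j l"
      unfolding lyap_def using that lyap_base_gt_1 by (intro power_increasing) auto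
    then have "eps * (1 + mu / lam) ^ n \<le> eps * lyap j l" using eps by simp
    moreover have "1 < eps * (1 + mu / lam) ^ n" using n eps by (simp add: field_simps)
    ultimately show ?thesis using never_visit_le_1[of j l] by (simp add: u_def)
  qed
  obtain m where "m \<noteq> j" and le_m: "\<And>l. l \<noteq> j \<Longrightarrow> u l \<le> u m"
    and less_m: "\<And>l. l \<noteq> j \<Longrightarrow> m < l \<Longrightarrow> u l < u m"
    by (rule obtain_last_maximizer[of "\<lambda>l. l \<noteq> j" k "j + n" u]) (use assms uk in \<open>auto dest!: u_neg\<close>)
  have "u m \<le> taboo_step j u m"
  proof -
    have "eps * taboo_step j (lyap j) m \<le> eps * lyap j m"
      using taboo_step_lyap_le[OF \<open>m \<noteq> j\<close>] eps by simp
    then show ?thesis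
      unfolding u_def taboo_step_diff never_visit_harmonic[of j m, symmetric] by simp
  qed
  moreover have "taboo_step j u m < u m"
    using taboo_step_less_max[OF \<open>m \<noteq> j\<close> _ le_m less_m] uk le_m[of k] assms by simp
  ultimately show False by simp
qed

lemma jump_recurrent: "dtmc_recurrent J"
  unfolding dtmc_recurrent_def recurrent_state_def
proof
  fix j
  have "never_visit j j = taboo_step j (never_visit j) j" by (rule never_visit_harmonic)
  also have "\<dots> = 0"
    unfolding taboo_step_def by (rule sum.neutral) (auto simp: taboo_def never_visit_eq_0)
  finally have "(\<lambda>n. 1 - avoid_prob j n j) \<longlonglongrightarrow> 1"
    using tendsto_diff[OF tendsto_const avoid_prob_tendsto, of 1 j j] by simp
  then have "(\<lambda>n. \<Sum>m<Suc n. first_passage J m j j) \<longlonglongrightarrow> 1"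
    by (simp add: avoid_prob_def lessThan_Suc_atMost)
  then show "(\<lambda>n. first_passage J n j j) sums 1"
    unfolding sums_def by (rule LIMSEQ_imp_Suc)
qed

end

section \<open>A minimum principle for the backward equations\<close>

lemma backward_nonneg_solution_continuous_on:
  assumes "backward_nonneg_solution q p"
  shows "continuous_on {0..} (\<lambda>s. p s x y)"
proof -
  have "continuous (at s within {0..}) (\<lambda>s. p s x y)" if "0 \<le> s" for s
  proof (cases "s = 0")
    case True
    have "((\<lambda>s. p s x y) \<longlongrightarrow> p 0 x y) (at_right 0)"
      using assms unfolding backward_nonneg_solution_def by blast
    then show ?thesis using True by (simp add: continuous_within at_within_Ici_at_right)
  next
    case False
    with that have "0 < s" by simp
    with assms have "((\<lambda>s. p s x y) has_real_derivative (\<Sum>z. q x z * p s z y)) (at s)"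
      unfolding backward_nonneg_solution_def by blast
    then show ?thesis by (rule continuous_at_imp_continuous_at_within[OF DERIV_isCont])
  qed
  then show ?thesis by (simp add: continuous_on_eq_continuous_within)
qed

lemma first_nonpos_time:
  fixes w :: "real \<Rightarrow> 'a \<Rightarrow> real"
  assumes "finite Z" and cont: "\<And>z. z \<in> Z \<Longrightarrow> continuous_on {0..} (\<lambda>s. w s z)"
    and init: "\<And>z. z \<in> Z \<Longrightarrow> 0 < w 0 z" and "0 \<le> t" "x \<in> Z" "w t x \<le> 0"
  obtains t0 x0 where "0 < t0" "x0 \<in> Z" "w t0 x0 \<le> 0"
    "\<And>s z. 0 \<le> s \<Longrightarrow> s < t0 \<Longrightarrow> z \<in> Z \<Longrightarrow> 0 < w s z"
    "\<And>z. z \<in> Z \<Longrightarrow> 0 \<le> w t0 z"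
proof -
  define S where "S = (\<Union>z\<in>Z. {0..} \<inter> (\<lambda>s. w s z) -` {..0})"
  have "closed S" unfolding S_def
    using \<open>finite Z\<close> by (intro closed_UN ballI continuous_closed_preimage cont) auto
  moreover have "t \<in> S" using assms by (auto simp: S_def)
  moreover have "bdd_below S" unfolding S_def by (rule bdd_belowI[of _ 0]) auto
  ultimately have "Inf S \<in> S" by (intro closed_contains_Inf) auto
  then obtain x0 where x0: "x0 \<in> Z" "w (Inf S) x0 \<le> 0" and "0 \<le> Inf S" by (auto simp: S_def)
  have before: "0 < w s z" if "0 \<le> s" "s < Inf S" "z \<in> Z" for s z
  proof (rule ccontr)
    assume "\<not> 0 < w s z"
    then have "w s z \<le> 0" by simp
    then have "s \<in> S" unfolding S_def using that(1,3) by blast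
    then have "Inf S \<le> s" using \<open>bdd_below S\<close> by (rule cInf_lower)
    then show False using that by simp
  qed
  have "0 < Inf S"
    using x0 init[OF x0(1)] \<open>0 \<le> Inf S\<close> by (cases "Inf S = 0") auto
  have "0 \<le> w (Inf S) z" if "z \<in> Z" for z
  proof (rule tendsto_lowerbound)
    have "continuous_on {0..Inf S} (\<lambda>s. w s z)" using cont[OF that] by (rule continuous_on_subset) auto
    then show "((\<lambda>s. w s z) \<longlongrightarrow> w (Inf S) z) (at_left (Inf S))"
      using \<open>0 < Inf S\<close> by (rule continuous_on_Icc_at_leftD)
    show "\<forall>\<^sub>F s in at_left (Inf S). 0 \<le> w s z"
      using eventually_at_left_real[OF \<open>0 < Inf S\<close>]
      by eventually_elim (use before that in \<open>auto intro: less_imp_le\<close>)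
  qed (simp add: trivial_limit_at_left_real)
  with \<open>0 < Inf S\<close> x0 before show ?thesis by (intro that) auto
qed

lemma DERIV_pos_left_imp_pos:
  fixes w :: "real \<Rightarrow> real"
  assumes "(w has_real_derivative D) (at t0)" and "0 < D" and "0 < t0"
    and before: "\<And>s. 0 \<le> s \<Longrightarrow> s < t0 \<Longrightarrow> 0 < w s"
  shows "0 < w t0"
proof -
  obtain d where "0 < d" and d: "\<And>h. 0 < h \<Longrightarrow> h < d \<Longrightarrow> w (t0 - h) < w t0"
    using DERIV_pos_inc_left[OF assms(1,2)] by blast
  define h where "h = min (d / 2) (t0 / 2)"
  have "0 < w (t0 - h)" by (rule before) (use \<open>0 < d\<close> \<open>0 < t0\<close> in \<open>simp_all add: h_def\<close>)
  also have "w (t0 - h) < w t0" by (rule d) (use \<open>0 < d\<close> \<open>0 < t0\<close> in \<open>simp_all add: h_def\<close>)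
  finally show ?thesis .
qed

context positive_rates
begin

definition generator :: "(nat \<Rightarrow> real) \<Rightarrow> nat \<Rightarrow> real" where
  "generator g x = lam * g (Suc x) + mu * (\<Sum>z<x. g z) - c x * g x"

lemma suminf_qrate_mult: "(\<Sum>z. qrate lam mu x z * g z) = generator g x"
proof -
  have "(\<Sum>z. qrate lam mu x z * g z) = (\<Sum>z\<le>Suc x. qrate lam mu x z * g z)"
    by (rule suminf_eq_sum_atMost) (simp add: qrate_def)
  also have "\<dots> = (\<Sum>z<x. mu * g z) + qrate lam mu x x * g x + qrate lam mu x (Suc x) * g (Suc x)"
    by (simp add: sum.atMost_Suc lessThan_Suc_atMost[symmetric] qrate_def)
  finally show ?thesis by (simp add: generator_def qrate_def crate_def sum_distrib_left algebra_simps)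
qed

lemma generator_add: "generator (\<lambda>z. f z + g z) x = generator f x + generator g x"
  unfolding generator_def by (simp add: sum.distrib algebra_simps)

lemma generator_diff: "generator (\<lambda>z. f z - g z) x = generator f x - generator g x"
  unfolding generator_def by (simp add: sum_subtractf algebra_simps)

lemma generator_minus: "generator (\<lambda>z. - f z) x = - generator f x"
  unfolding generator_def by (simp add: sum_negf)

lemma generator_cmult: "generator (\<lambda>z. a * f z) x = a * generator f x"
  unfolding generator_def by (simp add: sum_distrib_left algebra_simps)

lemma generator_nonneg_at_min:
  assumes "\<And>z. z \<le> Suc x \<Longrightarrow> g x \<le> g z"
  shows "0 \<le> generator g x"
proof -
  have "generator g x = lam * (g (Suc x) - g x) + mu * (\<Sum>z<x. g z - g x)"
    by (simp add: generator_def crate_def sum_subtractf algebra_simps)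
  moreover have "0 \<le> lam * (g (Suc x) - g x)" using assms[of "Suc x"] lam_pos by simp
  moreover have "0 \<le> mu * (\<Sum>z<x. g z - g x)"
    using assms mu_pos by (intro mult_nonneg_nonneg sum_nonneg) auto
  ultimately show ?thesis by simp
qed

lemma generator_pow2_le:
  assumes "0 \<le> a"
  shows "generator (\<lambda>z. a * 2 ^ z) x \<le> lam * (a * 2 ^ x)"
proof -
  have "(\<Sum>z<x. a * 2 ^ z) \<le> (\<Sum>z<x. a * 2 ^ x)"
    using assms by (intro sum_mono mult_left_mono power_increasing) auto
  then have "(\<Sum>z<x. a * 2 ^ z) \<le> real x * (a * 2 ^ x)" by simp
  then have "mu * (\<Sum>z<x. a * 2 ^ z) \<le> mu * (real x * (a * 2 ^ x))"
    using mu_pos by (intro mult_left_mono) auto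
  then show ?thesis unfolding generator_def crate_def by (simp add: algebra_simps)
qed

(* Upward jumps have size one, so on {..K} the generator sees no state beyond Suc K. *)
lemma generator_min_principle:
  fixes e :: "real \<Rightarrow> nat \<Rightarrow> real"
  assumes cont: "\<And>z. z \<le> K \<Longrightarrow> continuous_on {0..} (\<lambda>s. e s z)"
    and deriv: "\<And>s z. 0 < s \<Longrightarrow> z \<le> K \<Longrightarrow>
                  \<exists>D. ((\<lambda>s. e s z) has_real_derivative D) (at s) \<and> generator (e s) z \<le> D"
    and boundary: "\<And>s. 0 \<le> s \<Longrightarrow> 0 \<le> e s (Suc K)"
    and init: "\<And>z. z \<le> K \<Longrightarrow> 0 \<le> e 0 z"
    and t: "0 \<le> t" and x: "x \<le> K"
  shows "0 \<le> e t x"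
proof (rule ccontr)
  assume "\<not> 0 \<le> e t x"
  define eps where "eps = - e t x / (2 * exp t)"
  have eps: "0 < eps" unfolding eps_def using \<open>\<not> 0 \<le> e t x\<close> by (intro divide_pos_pos) auto
  define w where "w s z = e s z + eps * exp s" for s z
  obtain t0 x0 where "0 < t0" "x0 \<in> {..K}" "w t0 x0 \<le> 0"
    and before: "\<And>s z. 0 \<le> s \<Longrightarrow> s < t0 \<Longrightarrow> z \<in> {..K} \<Longrightarrow> 0 < w s z"
    and at_t0: "\<And>z. z \<in> {..K} \<Longrightarrow> 0 \<le> w t0 z"
  proof (rule first_nonpos_time[of "{..K}" w t x])
    show "continuous_on {0..} (\<lambda>s. w s z)" if "z \<in> {..K}" for z
      unfolding w_def using cont that by (intro continuous_intros) auto
    show "0 < w 0 z" if "z \<in> {..K}" for z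
      using init that eps by (simp add: w_def add_nonneg_pos)
    show "w t x \<le> 0"
      using \<open>\<not> 0 \<le> e t x\<close> by (simp add: w_def eps_def)
  qed (use t x in auto)
  from \<open>x0 \<in> {..K}\<close> have "x0 \<le> K" by simp
  have "0 < eps * exp t0" using eps by simp
  have min: "e t0 x0 \<le> e t0 z" if "z \<le> Suc x0" for z
  proof (cases "z \<le> K")
    case True
    then show ?thesis using at_t0[of z] \<open>w t0 x0 \<le> 0\<close> by (simp add: w_def)
  next
    case False
    then have "z = Suc K" using that \<open>x0 \<le> K\<close> by simp
    then show ?thesis
      using boundary[of t0] \<open>0 < t0\<close> \<open>w t0 x0 \<le> 0\<close> \<open>0 < eps * exp t0\<close> unfolding w_def by simp
  qed
  obtain D where D: "((\<lambda>s. e s x0) has_real_derivative D) (at t0)" "generator (e t0) x0 \<le> D"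
    using deriv \<open>0 < t0\<close> \<open>x0 \<le> K\<close> by blast
  have "0 < w t0 x0"
  proof (rule DERIV_pos_left_imp_pos[of "\<lambda>s. w s x0"])
    show "((\<lambda>s. w s x0) has_real_derivative D + eps * exp t0) (at t0)"
      unfolding w_def using D(1) by (auto intro!: derivative_eq_intros)
    show "0 < D + eps * exp t0"
      using generator_nonneg_at_min[where g = "e t0", OF min] D(2) \<open>0 < eps * exp t0\<close> by simp
  qed (use before \<open>0 < t0\<close> \<open>x0 \<le> K\<close> in auto)
  with \<open>w t0 x0 \<le> 0\<close> show False by simp
qed

lemma backward_solution_lower_bound:
  fixes f :: "real \<Rightarrow> nat \<Rightarrow> real"
  assumes "0 \<le> a"
    and cont: "\<And>z. z \<le> K \<Longrightarrow> continuous_on {0..} (\<lambda>s. f s z)"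
    and deriv: "\<And>s z. 0 < s \<Longrightarrow> z \<le> K \<Longrightarrow> ((\<lambda>s. f s z) has_real_derivative generator (f s) z) (at s)"
    and boundary: "\<And>s. 0 \<le> s \<Longrightarrow> 0 \<le> f s (Suc K) + a * exp (lam * s) * 2 ^ Suc K"
    and init: "\<And>z. z \<le> K \<Longrightarrow> 0 \<le> f 0 z + a * 2 ^ z"
    and "0 \<le> t" "x \<le> K"
  shows "0 \<le> f t x + a * exp (lam * t) * 2 ^ x"
proof -
  define e where "e s z = f s z + a * exp (lam * s) * 2 ^ z" for s z
  have "0 \<le> e t x"
  proof (rule generator_min_principle[where e = e and K = K])
    show "continuous_on {0..} (\<lambda>s. e s z)" if "z \<le> K" for z
      unfolding e_def by (intro continuous_intros cont[OF that])
    show "\<exists>D. ((\<lambda>s. e s z) has_real_derivative D) (at s) \<and> generator (e s) z \<le> D"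
      if "0 < s" "z \<le> K" for s z
    proof (intro exI conjI)
      show "((\<lambda>s. e s z) has_real_derivative generator (f s) z + lam * (a * exp (lam * s) * 2 ^ z)) (at s)"
        unfolding e_def using deriv[OF that] by (auto intro!: derivative_eq_intros)
      show "generator (e s) z \<le> generator (f s) z + lam * (a * exp (lam * s) * 2 ^ z)"
        unfolding e_def generator_add using generator_pow2_le[of "a * exp (lam * s)" z] \<open>0 \<le> a\<close>
        by simp
    qed
  qed (use assms in \<open>simp_all add: e_def\<close>)
  then show ?thesis by (simp add: e_def)
qed

end

section \<open>An explicit stochastic solution\<close>

lemma linear_ode_nonneg:
  fixes y g :: "real \<Rightarrow> real"
  assumes deriv: "\<And>s. 0 \<le> s \<Longrightarrow> (y has_real_derivative - a * y s + g s) (at s)"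
    and g: "\<And>s. 0 \<le> s \<Longrightarrow> 0 \<le> g s" and "0 \<le> y 0" and "0 \<le> t"
  shows "0 \<le> y t"
proof -
  define h where "h s = exp (a * s) * y s" for s
  have dh: "(h has_real_derivative exp (a * s) * g s) (at s)" if "0 \<le> s" for s
    unfolding h_def using deriv[OF that] by (auto intro!: derivative_eq_intros simp: algebra_simps)
  have "h 0 \<le> h t"
  proof (rule DERIV_nonneg_imp_increasing_open[OF \<open>0 \<le> t\<close>])
    show "\<exists>D. (h has_real_derivative D) (at s) \<and> 0 \<le> D" if "0 < s" "s < t" for s
      using dh[of s] g[of s] that by (intro exI[of _ "exp (a * s) * g s"]) auto
    show "continuous_on {0..t} h"
      using dh by (intro continuous_at_imp_continuous_on ballI DERIV_isCont) auto
  qed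
  then have "0 \<le> exp (a * t) * y t" using \<open>0 \<le> y 0\<close> by (simp add: h_def)
  then show ?thesis by (simp add: zero_le_mult_iff)
qed

context positive_rates
begin

(* tail t x k is P_x(X_t >= k), determined by tail t x 0 = 1, tail 0 x k = [k <= x] and
   d/dt tail t x k = lam * tail t x (k - 1) - c k * tail t x k for k > 0. This triangular system
   is solved by sums of exp (- decay j * t); tail_coef are the coefficients given by variation
   of constants, the last one fitting the initial value. *)
definition decay :: "nat \<Rightarrow> real" where
  "decay j = (if j = 0 then 0 else c j)"

primrec tail_coef :: "nat \<Rightarrow> nat \<Rightarrow> nat \<Rightarrow> real" where
  "tail_coef x 0 j = (if j = 0 then 1 else 0)"
| "tail_coef x (Suc k) j =
     (if j \<le> k then lam * tail_coef x k j / (c (Suc k) - decay j)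
      else if j = Suc k then
        (if Suc k \<le> x then 1 else 0) - (\<Sum>i\<le>k. lam * tail_coef x k i / (c (Suc k) - decay i))
      else 0)"

definition tail :: "real \<Rightarrow> nat \<Rightarrow> nat \<Rightarrow> real" where
  "tail t x k = (\<Sum>j\<le>k. tail_coef x k j * exp (- decay j * t))"

definition tail_deriv :: "real \<Rightarrow> nat \<Rightarrow> nat \<Rightarrow> real" where
  "tail_deriv t x k = (if k = 0 then 0 else lam * tail t x (k - 1) - c k * tail t x k)"

lemma decay_less_crate_Suc:
  assumes "j \<le> k"
  shows "decay j < c (Suc k)"
proof (cases "j = 0")
  case True
  then show ?thesis using crate_pos[of "Suc k"] by (simp add: decay_def)
next
  case False
  have "mu * real j \<le> mu * real k" using assms mu_pos by (intro mult_left_mono) auto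
  then have "mu * real j < mu + mu * real k" using mu_pos by linarith
  then show ?thesis using False lam_pos by (simp add: decay_def crate_def algebra_simps)
qed

lemma tail_index_0: "tail t x 0 = 1"
  by (simp add: tail_def decay_def)

lemma tail_time_0: "tail 0 x k = (if k \<le> x then 1 else 0)"
proof (cases k)
  case (Suc k')
  have "(\<Sum>j\<le>Suc k'. tail_coef x (Suc k') j)
      = (\<Sum>j\<le>k'. tail_coef x (Suc k') j) + tail_coef x (Suc k') (Suc k')"
    by (simp add: sum.atMost_Suc)
  also have "(\<Sum>j\<le>k'. tail_coef x (Suc k') j) = (\<Sum>i\<le>k'. lam * tail_coef x k' i / (c (Suc k') - decay i))"
    by (rule sum.cong) auto
  finally show ?thesis using Suc by (simp add: tail_def)
qed (simp add: tail_def)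

lemma tail_has_derivative: "((\<lambda>t. tail t x k) has_real_derivative tail_deriv t x k) (at t)"
proof -
  have "((\<lambda>t. tail t x k) has_real_derivative (\<Sum>j\<le>k. tail_coef x k j * (- decay j) * exp (- decay j * t))) (at t)"
    unfolding tail_def by (auto intro!: derivative_eq_intros simp: algebra_simps)
  moreover have "(\<Sum>j\<le>k. tail_coef x k j * (- decay j) * exp (- decay j * t)) = tail_deriv t x k"
  proof (cases k)
    case 0 then show ?thesis by (simp add: tail_deriv_def decay_def)
  next
    case (Suc k')
    have "(\<Sum>j\<le>k'. tail_coef x (Suc k') j * (- decay j) * exp (- decay j * t))
        = (\<Sum>j\<le>k'. lam * (tail_coef x k' j * exp (- decay j * t))
                     - c (Suc k') * (tail_coef x (Suc k') j * exp (- decay j * t)))"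
    proof (rule sum.cong)
      fix j assume "j \<in> {..k'}"
      then have "j \<le> k'" "c (Suc k') - decay j \<noteq> 0" using decay_less_crate_Suc[of j k'] by auto
      then show "tail_coef x (Suc k') j * (- decay j) * exp (- decay j * t)
          = lam * (tail_coef x k' j * exp (- decay j * t)) - c (Suc k') * (tail_coef x (Suc k') j * exp (- decay j * t))"
        by (simp add: field_simps)
    qed simp
    then show ?thesis using Suc
      by (simp add: tail_deriv_def tail_def sum.atMost_Suc sum_subtractf sum_distrib_left decay_def algebra_simps)
  qed
  ultimately show ?thesis by simp
qed

lemma continuous_on_tail: "continuous_on S (\<lambda>t. tail t x k)"
  by (rule continuous_at_imp_continuous_on) (auto intro: DERIV_isCont tail_has_derivative)

lemma tail_deriv_has_derivative:
  "((\<lambda>t. tail_deriv t x (Suc k)) has_real_derivative lam * tail_deriv t x k - c (Suc k) * tail_deriv t x (Suc k)) (at t)"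
proof -
  have "(\<lambda>t. tail_deriv t x (Suc k)) = (\<lambda>t. lam * tail t x k - c (Suc k) * tail t x (Suc k))"
    by (simp add: fun_eq_iff tail_deriv_def)
  then show ?thesis by (auto intro!: derivative_eq_intros tail_has_derivative)
qed

lemma generator_tail_has_derivative:
  "((\<lambda>t. generator (\<lambda>z. tail t z k) x) has_real_derivative generator (\<lambda>z. tail_deriv t z k) x) (at t)"
  unfolding generator_def by (auto intro!: derivative_eq_intros tail_has_derivative)

lemma generator_tail_time_0: "generator (\<lambda>z. tail 0 z k) x = tail_deriv 0 x k"
proof (cases k)
  case 0
  then show ?thesis by (simp add: generator_def tail_index_0 tail_deriv_def crate_def)
next
  case (Suc k')
  have count: "(\<Sum>z<x. if Suc k' \<le> z then 1 else 0 :: real) = real (x - Suc k')"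
    by (induction x) (auto simp: Suc_diff_le)
  show ?thesis unfolding Suc generator_def tail_time_0 tail_deriv_def count
    by (cases "Suc k' \<le> x") (auto simp: crate_def of_nat_diff algebra_simps)
qed

lemma generator_tail:
  assumes "0 \<le> t"
  shows "generator (\<lambda>z. tail t z k) x = tail_deriv t x k"
  using assms
proof (induction k arbitrary: t)
  case 0
  then show ?case by (simp add: generator_def tail_index_0 tail_deriv_def crate_def)
next
  case (Suc k)
  define Phi where "Phi s = generator (\<lambda>z. tail s z (Suc k)) x - tail_deriv s x (Suc k)" for s
  have Phi_deriv: "(Phi has_real_derivative - c (Suc k) * Phi s) (at s)" if "0 \<le> s" for s
  proof -
    have "generator (\<lambda>z. tail_deriv s z (Suc k)) x
        = lam * generator (\<lambda>z. tail s z k) x - c (Suc k) * generator (\<lambda>z. tail s z (Suc k)) x"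
      by (simp add: tail_deriv_def generator_diff generator_cmult)
    also have "generator (\<lambda>z. tail s z k) x = tail_deriv s x k" using Suc.IH[OF that] .
    finally show ?thesis
      unfolding Phi_def
      by (auto intro!: derivative_eq_intros generator_tail_has_derivative tail_deriv_has_derivative
               simp: algebra_simps)
  qed
  have "Phi 0 = 0" by (simp add: Phi_def generator_tail_time_0)
  have "0 \<le> Phi t"
    by (rule linear_ode_nonneg[of Phi "c (Suc k)" "\<lambda>_. 0"]) (use Phi_deriv \<open>Phi 0 = 0\<close> Suc.prems in auto)
  moreover have "0 \<le> - Phi t"
    by (rule linear_ode_nonneg[of "\<lambda>s. - Phi s" "c (Suc k)" "\<lambda>_. 0"])
       (use \<open>Phi 0 = 0\<close> Suc.prems in \<open>auto intro!: derivative_eq_intros Phi_deriv\<close>)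
  ultimately show ?case by (simp add: Phi_def)
qed

lemma tail_nonneg: "0 \<le> t \<Longrightarrow> 0 \<le> tail t x k"
proof (induction k arbitrary: t)
  case (Suc k)
  show ?case
  proof (rule linear_ode_nonneg[where y = "\<lambda>s. tail s x (Suc k)" and t = t
        and a = "c (Suc k)" and g = "\<lambda>s. lam * tail s x k"])
    fix s :: real assume "0 \<le> s"
    show "((\<lambda>t. tail t x (Suc k)) has_real_derivative - c (Suc k) * tail s x (Suc k) + lam * tail s x k) (at s)"
      using tail_has_derivative[of x "Suc k" s] by (simp add: tail_deriv_def)
    show "0 \<le> lam * tail s x k" using Suc.IH[OF \<open>0 \<le> s\<close>] lam_pos by simp
  qed (use Suc.prems in \<open>simp_all add: tail_time_0\<close>)
qed (simp add: tail_index_0)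

lemma tail_Suc_le: "0 \<le> t \<Longrightarrow> tail t x (Suc k) \<le> tail t x k"
proof (induction k arbitrary: t)
  case 0
  have "0 \<le> tail t x 0 - tail t x (Suc 0)"
  proof (rule linear_ode_nonneg[where y = "\<lambda>s. tail s x 0 - tail s x (Suc 0)" and t = t
        and a = "c 0" and g = "\<lambda>s. mu * tail s x 1"])
    fix s :: real assume "0 \<le> s"
    show "((\<lambda>t. tail t x 0 - tail t x (Suc 0)) has_real_derivative
            - c 0 * (tail s x 0 - tail s x (Suc 0)) + mu * tail s x 1) (at s)"
      using tail_has_derivative[of x "Suc 0" s]
      by (auto intro!: derivative_eq_intros simp: tail_deriv_def tail_index_0 crate_def algebra_simps)
    show "0 \<le> mu * tail s x 1" using tail_nonneg[OF \<open>0 \<le> s\<close>] mu_pos by simp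
  qed (use 0 in \<open>simp_all add: tail_time_0\<close>)
  then show ?case by simp
next
  case (Suc k)
  have "0 \<le> tail t x (Suc k) - tail t x (Suc (Suc k))"
  proof (rule linear_ode_nonneg[where y = "\<lambda>s. tail s x (Suc k) - tail s x (Suc (Suc k))" and t = t
        and a = "c (Suc k)" and g = "\<lambda>s. lam * (tail s x k - tail s x (Suc k)) + mu * tail s x (Suc (Suc k))"])
    fix s :: real assume "0 \<le> s"
    show "((\<lambda>t. tail t x (Suc k) - tail t x (Suc (Suc k))) has_real_derivative
            - c (Suc k) * (tail s x (Suc k) - tail s x (Suc (Suc k)))
            + (lam * (tail s x k - tail s x (Suc k)) + mu * tail s x (Suc (Suc k)))) (at s)"
      using tail_has_derivative[of x "Suc k" s] tail_has_derivative[of x "Suc (Suc k)" s]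
      by (auto intro!: derivative_eq_intros simp: tail_deriv_def crate_def algebra_simps)
    show "0 \<le> lam * (tail s x k - tail s x (Suc k)) + mu * tail s x (Suc (Suc k))"
      using tail_nonneg[OF \<open>0 \<le> s\<close>] Suc.IH[OF \<open>0 \<le> s\<close>] mu_pos lam_pos by simp
  qed (use Suc.prems in \<open>simp_all add: tail_time_0\<close>)
  then show ?case by simp
qed

lemma tail_le_1: "0 \<le> t \<Longrightarrow> tail t x k \<le> 1"
  by (induction k) (auto simp: tail_index_0 dest: tail_Suc_le[of t x] intro: order_trans)

lemma tail_has_derivative_generator:
  "0 \<le> t \<Longrightarrow> ((\<lambda>s. tail s x k) has_real_derivative generator (\<lambda>z. tail t z k) x) (at t)"
  using tail_has_derivative generator_tail by simp

lemma tail_le_pow2: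
  assumes "0 \<le> t"
  shows "tail t x N \<le> exp (lam * t) * 2 ^ x / 2 ^ N"
proof -
  have "0 \<le> - tail t x N + 1 / 2 ^ N * exp (lam * t) * 2 ^ x"
  proof (rule backward_solution_lower_bound[where K = "max x N"])
    show "continuous_on {0..} (\<lambda>s. - tail s z N)" for z
      by (intro continuous_intros continuous_on_tail)
    show "((\<lambda>s. - tail s z N) has_real_derivative generator (\<lambda>z. - tail s z N) z) (at s)"
      if "0 < s" for s z
      unfolding generator_minus using that by (intro DERIV_minus tail_has_derivative_generator) simp
    show "0 \<le> - tail s (Suc (max x N)) N + 1 / 2 ^ N * exp (lam * s) * 2 ^ Suc (max x N)"
      if "0 \<le> s" for s
    proof -
      have "(2::real) ^ N \<le> 2 ^ Suc (max x N)" by (rule power_increasing) auto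
      then have "(1::real) \<le> 2 ^ Suc (max x N) / 2 ^ N" by simp
      also have "\<dots> \<le> exp (lam * s) * (2 ^ Suc (max x N) / 2 ^ N)"
        using mult_right_mono[of 1 "exp (lam * s)" "2 ^ Suc (max x N) / 2 ^ N"] that lam_pos by simp
      finally have "1 \<le> 1 / 2 ^ N * exp (lam * s) * 2 ^ Suc (max x N)" by (simp add: field_simps)
      with tail_le_1[OF that, of "Suc (max x N)" N] show ?thesis by linarith
    qed
    show "0 \<le> - tail 0 z N + 1 / 2 ^ N * 2 ^ z" for z
      by (auto simp: tail_time_0 le_divide_eq power_increasing)
  qed (use assms in auto)
  then show ?thesis by simp
qed

lemma tail_tendsto_0: "0 \<le> t \<Longrightarrow> (\<lambda>N. tail t x N) \<longlonglongrightarrow> 0"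
  by (rule tendsto_sandwich[where f = "\<lambda>_. 0" and h = "\<lambda>N. exp (lam * t) * 2 ^ x / 2 ^ N"])
     (simp_all add: tail_nonneg tail_le_pow2 LIMSEQ_divide_realpow_zero)

definition ptrans :: "real \<Rightarrow> nat \<Rightarrow> nat \<Rightarrow> real" where
  "ptrans t x y = tail t x y - tail t x (Suc y)"

lemma ptrans_nonneg: "0 \<le> t \<Longrightarrow> 0 \<le> ptrans t x y"
  using tail_Suc_le by (simp add: ptrans_def)

lemma ptrans_le_1: "0 \<le> t \<Longrightarrow> ptrans t x y \<le> 1"
  using tail_le_1[of t x y] tail_nonneg[of t x "Suc y"] by (simp add: ptrans_def)

lemma ptrans_sums:
  assumes "0 \<le> t"
  shows "(\<lambda>y. ptrans t x y) sums 1"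
proof -
  have "(\<lambda>n. 1 - tail t x n) \<longlonglongrightarrow> 1 - 0" using tail_tendsto_0[OF assms] by (intro tendsto_intros)
  then show ?thesis unfolding sums_def ptrans_def sum_lessThan_telescope' tail_index_0 by simp
qed

lemma continuous_on_ptrans: "continuous_on S (\<lambda>t. ptrans t x y)"
  unfolding ptrans_def by (intro continuous_intros continuous_on_tail)

lemma ptrans_has_derivative:
  "0 \<le> t \<Longrightarrow> ((\<lambda>s. ptrans s x y) has_real_derivative generator (\<lambda>z. ptrans t z y) x) (at t)"
  unfolding ptrans_def generator_diff by (intro DERIV_diff tail_has_derivative_generator)

lemma backward_nonneg_solution_ptrans: "backward_nonneg_solution (qrate lam mu) ptrans"
  unfolding backward_nonneg_solution_def suminf_qrate_mult
proof (intro conjI allI impI)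
  show "0 \<le> ptrans t x y" if "0 \<le> t" for t x y using that by (rule ptrans_nonneg)
  show "ptrans 0 x y = (if x = y then 1 else 0)" for x y by (simp add: ptrans_def tail_time_0)
  show "((\<lambda>s. ptrans s x y) has_real_derivative generator (\<lambda>z. ptrans t z y) x) (at t)"
    if "0 < t" for t x y using that by (simp add: ptrans_has_derivative)
  fix x y
  have "isCont (\<lambda>s. ptrans s x y) 0" using ptrans_has_derivative[of 0] by (rule DERIV_isCont) simp
  then show "((\<lambda>s. ptrans s x y) \<longlongrightarrow> ptrans 0 x y) (at_right 0)"
    unfolding isCont_def by (rule tendsto_within_subset) simp
qed

section \<open>Minimality of the explicit solution\<close>

lemma ptrans_le_solution_approx:
  assumes sol: "backward_nonneg_solution (qrate lam mu) p" and "0 \<le> t" "x \<le> K"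
  shows "ptrans t x y \<le> p t x y + exp (lam * t) * 2 ^ x / 2 ^ Suc K"
proof -
  have "0 \<le> (p t x y - ptrans t x y) + 1 / 2 ^ Suc K * exp (lam * t) * 2 ^ x"
  proof (rule backward_solution_lower_bound[where f = "\<lambda>s z. p s z y - ptrans s z y" and K = K])
    show "continuous_on {0..} (\<lambda>s. p s z y - ptrans s z y)" for z
      by (intro continuous_intros backward_nonneg_solution_continuous_on[OF sol] continuous_on_ptrans)
    show "((\<lambda>s. p s z y - ptrans s z y) has_real_derivative generator (\<lambda>z. p s z y - ptrans s z y) z) (at s)"
      if "0 < s" for s z
    proof -
      have "((\<lambda>s. p s z y) has_real_derivative generator (\<lambda>z. p s z y) z) (at s)"
        using sol that unfolding backward_nonneg_solution_def suminf_qrate_mult by blast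
      then show ?thesis
        unfolding generator_diff using that by (intro DERIV_diff ptrans_has_derivative) simp_all
    qed
    show "0 \<le> p s (Suc K) y - ptrans s (Suc K) y + 1 / 2 ^ Suc K * exp (lam * s) * 2 ^ Suc K"
      if "0 \<le> s" for s
    proof -
      have "0 \<le> p s (Suc K) y" using sol that unfolding backward_nonneg_solution_def by blast
      moreover have "1 \<le> exp (lam * s)" using that lam_pos by simp
      moreover have "1 / 2 ^ Suc K * exp (lam * s) * 2 ^ Suc K = exp (lam * s)" by simp
      ultimately show ?thesis using ptrans_le_1[OF that, of "Suc K" y] by linarith
    qed
    show "0 \<le> p 0 z y - ptrans 0 z y + 1 / 2 ^ Suc K * 2 ^ z" for z
    proof -
      have "p 0 z y = (if z = y then 1 else 0)" using sol unfolding backward_nonneg_solution_def by blast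
      then have "p 0 z y = ptrans 0 z y" by (simp add: ptrans_def tail_time_0)
      then show ?thesis by simp
    qed
  qed (use assms in auto)
  then show ?thesis by simp
qed

lemma ptrans_le_solution:
  assumes "backward_nonneg_solution (qrate lam mu) p" and "0 \<le> t"
  shows "ptrans t x y \<le> p t x y"
proof (rule tendsto_le[OF trivial_limit_sequentially])
  have "(\<lambda>K. exp (lam * t) * 2 ^ x / 2 ^ Suc K) \<longlonglongrightarrow> 0"
    by (rule LIMSEQ_Suc[OF LIMSEQ_divide_realpow_zero]) simp
  then show "(\<lambda>K. p t x y + exp (lam * t) * 2 ^ x / 2 ^ Suc K) \<longlonglongrightarrow> p t x y"
    using tendsto_add[OF tendsto_const] by fastforce
  show "\<forall>\<^sub>F K in sequentially. ptrans t x y \<le> p t x y + exp (lam * t) * 2 ^ x / 2 ^ Suc K"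
    using eventually_ge_at_top[of x] by eventually_elim (rule ptrans_le_solution_approx[OF assms])
qed simp

lemma minimal_backward_solution_sums:
  assumes "minimal_backward_solution (qrate lam mu) p" and "0 \<le> t"
  shows "(\<lambda>y. p t x y) sums 1"
proof -
  have "p t x y = ptrans t x y" for y
    using assms backward_nonneg_solution_ptrans ptrans_le_solution
    unfolding minimal_backward_solution_def by (meson order_antisym)
  then show ?thesis using ptrans_sums[OF \<open>0 \<le> t\<close>] by simp
qed

end

theorem mainTheorem1:
  fixes lam mu :: real
  assumes "lam > 0" and "mu > 0"
  shows "dtmc_irreducible (jump lam mu) \<and> dtmc_recurrent (jump lam mu) \<and>
         (\<forall>p. minimal_backward_solution (qrate lam mu) p \<longrightarrow>
              (\<forall>x. \<forall>t\<ge>0. (\<lambda>y. p t x y) sums 1))"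
proof -
  interpret positive_rates lam mu using assms by unfold_locales
  show ?thesis using jump_irreducible jump_recurrent minimal_backward_solution_sums by blast
qed

end
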